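(* $\gamma^{L-ID}(\mathcal{S})=\frac{3}{11}$: every local identifying code in the square grid has density at least $3/11$, and there is a local identifying code in the square grid of density $3/11$.
   Context: The square grid $\mathcal{S}$ has vertex set $\mathbb{Z}^2$, with $\mathbf{u},\mathbf{v}$ adjacent iff $\mathbf{u}-\mathbf{v}\in\{(\pm1,0),(0,\pm1)\}$. For a nonempty $C\subseteq\mathbb{Z}^2$ and vertex $\mathbf{u}$, $I(\mathbf{u})=N[\mathbf{u}]\cap C$ where $N[\mathbf{u}]$ is the closed neighbourhood. $C$ is a local identifying code if $I(\mathbf{u})\ne\emptyset$ for all $\mathbf{u}$ and $I(\mathbf{u})\ne I(\mathbf{v})$ for all adjacent $\mathbf{u},\mathbf{v}$. The density of $C$ is $D(C)=\limsup_{n\to\infty}|C\cap Q_n|/|Q_n|$ with $Q_n=\{(i,j)\in\mathbb{Z}^2:|i|\le n,|j|\le n\}$. $\gamma^{L-ID}(G)$ denotes the smallest density of a local identifying code in $G$. *)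

theory Defs
  imports "HOL-Analysis.Analysis" "HOL-Library.Liminf_Limsup"
begin

type_synonym vtx = "int \<times> int"

definition sq_adj :: "vtx \<Rightarrow> vtx \<Rightarrow> bool" where
  "sq_adj u v \<longleftrightarrow> (\<bar>fst u - fst v\<bar> + \<bar>snd u - snd v\<bar> = 1)"

definition closed_nbhd :: "vtx \<Rightarrow> vtx set" where
  "closed_nbhd u = {v. v = u \<or> sq_adj u v}"

definition I_set :: "vtx set \<Rightarrow> vtx \<Rightarrow> vtx set" where
  "I_set C u = closed_nbhd u \<inter> C"

definition local_id_code :: "vtx set \<Rightarrow> bool" where
  "local_id_code C \<longleftrightarrow> C \<noteq> {} \<and>
     (\<forall>u. I_set C u \<noteq> {}) \<and>
     (\<forall>u v. sq_adj u v \<longrightarrow> I_set C u \<noteq> I_set C v)"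

definition Qbox :: "nat \<Rightarrow> vtx set" where
  "Qbox n = {(i, j). \<bar>i\<bar> \<le> int n \<and> \<bar>j\<bar> \<le> int n}"

definition grid_density :: "vtx set \<Rightarrow> ereal" where
  "grid_density C = limsup (\<lambda>n. ereal (real (card (C \<inter> Qbox n)) / real (card (Qbox n))))"

definition gamma_LID_square :: ereal where
  "gamma_LID_square = (INF C \<in> {C. local_id_code C}. grid_density C)"

end

theory Submission
  imports Defs "HOL-Real_Asymp.Real_Asymp"
begin

text \<open>Every vertex \<open>u\<close> carries charge 1 and distributes it over the codewords of \<open>I_set C u\<close>.
  The local identification condition guarantees that the neighbours of a codeword without code
  neighbours see a second codeword, and that a code neighbour of a codeword with a single code
  neighbour has at least two code neighbours itself; with a suitable distribution rule this caps
  the charge received by any codeword at \<open>11/3\<close>. Double counting over a box gives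
  \<open>card (Qbox n) \<le> 11/3 * card (C \<inter> Qbox (n + 1))\<close>, hence density at least \<open>3/11\<close>.
  The bound is attained by the code of all \<open>(x, y)\<close> with \<open>x + 3y \<equiv> 0, 3, 6 (mod 11)\<close>.\<close>

definition open_nbhd :: "vtx \<Rightarrow> vtx set" where
  "open_nbhd u = {v. sq_adj u v}"

lemma sq_adj_commute: "sq_adj u v \<longleftrightarrow> sq_adj v u"
  by (auto simp: sq_adj_def abs_minus_commute)

lemma open_nbhd_eq: "open_nbhd (x, y) = {(x + 1, y), (x - 1, y), (x, y + 1), (x, y - 1)}"
  by (auto simp: open_nbhd_def sq_adj_def abs_if)

lemma closed_nbhd_eq_insert: "closed_nbhd u = insert u (open_nbhd u)"
  by (auto simp: closed_nbhd_def open_nbhd_def)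

lemma not_in_open_nbhd [simp]: "u \<notin> open_nbhd u"
  by (simp add: open_nbhd_def sq_adj_def)

lemma finite_open_nbhd [simp]: "finite (open_nbhd u)"
  by (cases u) (simp add: open_nbhd_eq)

lemma finite_closed_nbhd [simp]: "finite (closed_nbhd u)"
  by (simp add: closed_nbhd_eq_insert)

lemma card_open_nbhd: "card (open_nbhd u) = 4"
  by (cases u) (simp add: open_nbhd_eq)

lemma mem_open_nbhd_commute: "v \<in> open_nbhd u \<longleftrightarrow> u \<in> open_nbhd v"
  by (simp add: open_nbhd_def sq_adj_commute)

lemma mem_closed_nbhd_commute: "v \<in> closed_nbhd u \<longleftrightarrow> u \<in> closed_nbhd v"
  by (auto simp: closed_nbhd_def sq_adj_commute)

lemma mem_closed_nbhd_iff: "(a, b) \<in> closed_nbhd (x, y) \<longleftrightarrow> \<bar>x - a\<bar> + \<bar>y - b\<bar> \<le> 1"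
  by (simp add: closed_nbhd_def sq_adj_def) arith

lemma closed_nbhd_subset_Qbox_Suc: "u \<in> Qbox n \<Longrightarrow> closed_nbhd u \<subseteq> Qbox (Suc n)"
  by (cases u) (auto simp: closed_nbhd_def sq_adj_def Qbox_def)

lemma Qbox_eq_Times: "Qbox n = {-int n..int n} \<times> {-int n..int n}"
  by (auto simp: Qbox_def)

lemma finite_Qbox [simp]: "finite (Qbox n)"
  by (simp add: Qbox_eq_Times)

lemma card_Qbox: "real (card (Qbox n)) = (2 * real n + 1)\<^sup>2"
proof -
  have "card {-int n..int n} = 2 * n + 1"
    by simp
  then have "card (Qbox n) = (2 * n + 1)\<^sup>2"
    by (simp add: Qbox_eq_Times card_cartesian_product power2_eq_square)
  then show ?thesis
    by simp
qed

lemma I_set_code: "u \<in> C \<Longrightarrow> I_set C u = insert u (open_nbhd u \<inter> C)"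
  by (auto simp: I_set_def closed_nbhd_eq_insert)

lemma I_set_noncode: "u \<notin> C \<Longrightarrow> I_set C u = open_nbhd u \<inter> C"
  by (auto simp: I_set_def closed_nbhd_eq_insert)

lemma finite_I_set [simp]: "finite (I_set C u)"
  by (simp add: I_set_def)

lemma I_set_neqI:
  "p \<in> C \<Longrightarrow> (p \<in> closed_nbhd u) \<noteq> (p \<in> closed_nbhd v) \<Longrightarrow> I_set C u \<noteq> I_set C v"
  by (auto simp: I_set_def)

lemma I_set_nonempty: "p \<in> C \<Longrightarrow> p \<in> closed_nbhd u \<Longrightarrow> I_set C u \<noteq> {}"
  by (auto simp: I_set_def)

definition code_degree :: "vtx set \<Rightarrow> vtx \<Rightarrow> nat" where
  "code_degree C u = card (open_nbhd u \<inter> C)"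

lemma card_I_set: "card (I_set C u) = of_bool (u \<in> C) + code_degree C u"
  by (cases "u \<in> C") (simp_all add: I_set_code I_set_noncode code_degree_def)

lemma code_degree_le_4: "code_degree C u \<le> 4"
  unfolding code_degree_def by (metis card_open_nbhd card_mono finite_open_nbhd inf_le1)

lemma card_open_nbhd_diff: "card (open_nbhd u - C) = 4 - code_degree C u"
  by (simp add: card_Diff_subset_Int card_open_nbhd code_degree_def)

lemma local_id_code_card_I_set_pos:
  assumes "local_id_code C"
  shows "0 < card (I_set C u)"
proof -
  have "I_set C u \<noteq> {}"
    using assms unfolding local_id_code_def by blast
  then show ?thesis
    by (simp add: card_gt_0_iff)
qed

lemma card_eq_1_member: "card A = 1 \<Longrightarrow> x \<in> A \<Longrightarrow> A = {x}"
  by (metis card_1_singletonE singletonD)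

lemma local_id_code_isolated:
  assumes C: "local_id_code C" and Ic: "I_set C c = {c}" and adj: "sq_adj c v"
  shows "2 \<le> card (I_set C v)"
proof -
  have "c \<in> C"
    using Ic unfolding I_set_def by blast
  moreover have "c \<in> closed_nbhd v"
    using adj sq_adj_commute unfolding closed_nbhd_def by blast
  ultimately have "c \<in> I_set C v"
    unfolding I_set_def by blast
  moreover have "I_set C c \<noteq> I_set C v"
    using C adj unfolding local_id_code_def by blast
  ultimately have "card (I_set C v) \<noteq> 1"
    using Ic card_eq_1_member by metis
  with local_id_code_card_I_set_pos[OF C, of v] show ?thesis
    by linarith
qed

lemma local_id_code_pendant:
  assumes C: "local_id_code C" and "c \<in> C" and deg: "code_degree C c = 1"
    and v: "v \<in> open_nbhd c \<inter> C"
  shows "2 \<le> code_degree C v"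
proof (rule ccontr)
  assume "\<not> ?thesis"
  have adj: "sq_adj c v"
    using v by (simp add: open_nbhd_def)
  have c: "c \<in> open_nbhd v \<inter> C"
    using v \<open>c \<in> C\<close> mem_open_nbhd_commute by blast
  then have "code_degree C v \<noteq> 0"
    by (auto simp: code_degree_def card_eq_0_iff)
  with \<open>\<not> ?thesis\<close> have "code_degree C v = 1"
    by linarith
  then have "open_nbhd v \<inter> C = {c}"
    using c by (intro card_eq_1_member) (simp_all add: code_degree_def)
  then have "I_set C v = {v, c}"
    using I_set_code[of v C] v by simp
  moreover have "open_nbhd c \<inter> C = {v}"
    using v deg by (intro card_eq_1_member) (simp_all add: code_degree_def)
  then have "I_set C c = {c, v}"
    using I_set_code[of c C] \<open>c \<in> C\<close> by simp
  ultimately have "I_set C c = I_set C v"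
    by blast
  with C adj show False
    unfolding local_id_code_def by blast
qed

text \<open>The distribution rule: \<open>u\<close> splits its charge equally among the codewords of
  \<open>I_set C u\<close>, except that a codeword \<open>u\<close> sends only \<open>1/6\<close> to a code neighbour that has no
  other code neighbour and keeps the rest, \<open>share C u u\<close>, for itself.\<close>
definition handout :: "vtx set \<Rightarrow> vtx \<Rightarrow> vtx \<Rightarrow> real" where
  "handout C u c = (if u \<in> C \<and> code_degree C c = 1 then 1/6 else 1 / card (I_set C u))"

definition share :: "vtx set \<Rightarrow> vtx \<Rightarrow> vtx \<Rightarrow> real" where
  "share C u c = (if c = u then 1 - (\<Sum>v\<in>open_nbhd u \<inter> C. handout C u v) else handout C u c)"

definition received_charge :: "vtx set \<Rightarrow> vtx \<Rightarrow> real" where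
  "received_charge C c = (\<Sum>u\<in>closed_nbhd c. share C u c)"

lemma share_open_nbhd: "u \<in> open_nbhd c \<Longrightarrow> share C u c = handout C u c"
  using not_in_open_nbhd by (auto simp: share_def)

lemma handout_nonneg: "0 \<le> handout C u c"
  by (simp add: handout_def)

lemma handout_bounds:
  assumes "0 < card (I_set C u)"
  shows "1/6 \<le> handout C u c" and "handout C u c \<le> 1 / card (I_set C u)"
proof -
  have "card (I_set C u) \<le> 5"
    using card_I_set[of C u] code_degree_le_4[of C u] by simp
  then have "1/6 \<le> 1 / real (card (I_set C u))"
    using assms by (simp add: field_simps)
  then show "1/6 \<le> handout C u c" and "handout C u c \<le> 1 / card (I_set C u)"
    by (simp_all add: handout_def)
qed

lemma sum_share_I_set:
  assumes C: "local_id_code C"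
  shows "(\<Sum>c\<in>I_set C u. share C u c) = 1"
proof (cases "u \<in> C")
  case True
  have "(\<Sum>c\<in>open_nbhd u \<inter> C. share C u c) = (\<Sum>c\<in>open_nbhd u \<inter> C. handout C u c)"
    by (intro sum.cong) (auto simp: share_open_nbhd mem_open_nbhd_commute)
  then show ?thesis
    using True by (simp add: I_set_code share_def)
next
  case False
  have "(\<Sum>c\<in>I_set C u. share C u c) = (\<Sum>c\<in>I_set C u. 1 / card (I_set C u))"
    using False by (intro sum.cong) (auto simp: share_def handout_def I_set_def)
  then show ?thesis
    using local_id_code_card_I_set_pos[OF C, of u] by (simp add: card_gt_0_iff)
qed

lemma share_nonneg:
  assumes "c \<in> I_set C u"
  shows "0 \<le> share C u c"
proof (cases "c = u")
  case True
  then have u: "u \<in> C"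
    using assms by (simp add: I_set_def)
  then have k: "card (I_set C u) = 1 + code_degree C u"
    by (simp add: card_I_set)
  have "(\<Sum>v\<in>open_nbhd u \<inter> C. handout C u v) \<le> code_degree C u * (1 / card (I_set C u))"
    using handout_bounds(2)[of C u] k unfolding code_degree_def
    by (intro sum_bounded_above) simp
  also have "\<dots> \<le> 1"
    using k by (simp add: field_simps)
  finally show ?thesis
    using True by (simp add: share_def)
qed (simp add: share_def handout_nonneg)

lemma share_self_le:
  assumes C: "local_id_code C" and "c \<in> C"
  shows "share C c c \<le> (if code_degree C c = 0 then 1
                         else if code_degree C c = 1 then 1/2 else 1 - code_degree C c / 6)"
proof -
  define A where "A = open_nbhd c \<inter> C"
  have share: "share C c c = 1 - (\<Sum>v\<in>A. handout C c v)"
    by (simp add: share_def A_def)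
  have pos: "0 < card (I_set C c)"
    using C by (rule local_id_code_card_I_set_pos)
  consider "code_degree C c = 0" | "code_degree C c = 1" | "2 \<le> code_degree C c"
    by linarith
  then show ?thesis
  proof cases
    case 1
    then have "A = {}"
      by (simp add: A_def code_degree_def)
    then show ?thesis
      using 1 share by simp
  next
    case 2
    then obtain v where A: "A = {v}"
      by (metis A_def card_1_singletonE code_degree_def)
    then have "2 \<le> code_degree C v"
      using local_id_code_pendant[OF C \<open>c \<in> C\<close> 2, of v] by (simp add: A_def)
    then have "handout C c v = 1/2"
      using \<open>c \<in> C\<close> 2 by (simp add: handout_def card_I_set)
    then show ?thesis
      using 2 share A by simp
  next
    case 3
    have "code_degree C c * (1/6) \<le> (\<Sum>v\<in>A. handout C c v)"
      unfolding code_degree_def A_def[symmetric]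
      by (intro sum_bounded_below handout_bounds(1)[OF pos])
    then show ?thesis
      using 3 share by simp
  qed
qed

lemma handout_to_codeword_le:
  assumes "c \<in> C" and u: "u \<in> open_nbhd c \<inter> C"
  shows "handout C u c \<le> (if code_degree C c = 1 then 1/6 else 1/2)"
proof (cases "code_degree C c = 1")
  case False
  have "c \<in> open_nbhd u"
    using u mem_open_nbhd_commute by blast
  then have "{u, c} \<subseteq> I_set C u"
    using u \<open>c \<in> C\<close> by (simp add: I_set_code)
  moreover have "u \<noteq> c"
    using u by auto
  ultimately have "2 \<le> card (I_set C u)"
    by (metis card_2_iff card_mono finite_I_set)
  then show ?thesis
    using False u by (simp add: handout_def field_simps)
qed (use u in \<open>simp add: handout_def\<close>)

lemma handout_from_noncodeword_le:
  assumes C: "local_id_code C" and "c \<in> C" and u: "u \<in> open_nbhd c - C"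
  shows "handout C u c \<le> (if code_degree C c = 0 then 1/2 else 1)"
proof -
  have "1 \<le> card (I_set C u)"
    using local_id_code_card_I_set_pos[OF C] by (simp add: Suc_le_eq)
  moreover have "2 \<le> card (I_set C u)" if "code_degree C c = 0"
  proof -
    have "I_set C c = {c}"
      using that \<open>c \<in> C\<close> by (simp add: I_set_code code_degree_def)
    then show ?thesis
      using local_id_code_isolated[OF C] u by (simp add: open_nbhd_def)
  qed
  ultimately show ?thesis
    using u by (auto simp: handout_def field_simps)
qed

lemma received_charge_le:
  assumes C: "local_id_code C" and "c \<in> C"
  shows "received_charge C c \<le> 11/3"
proof -
  define g where "g = code_degree C c"
  define A where "A = open_nbhd c \<inter> C"
  define B where "B = open_nbhd c - C"
  have N: "closed_nbhd c = insert c (A \<union> B)" and AB: "A \<inter> B = {}" "c \<notin> A \<union> B"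
    by (auto simp: A_def B_def closed_nbhd_eq_insert)
  have "(\<Sum>u\<in>A \<union> B. share C u c) = (\<Sum>u\<in>A \<union> B. handout C u c)"
    by (intro sum.cong) (auto simp: A_def B_def share_open_nbhd)
  then have total: "received_charge C c
      = share C c c + (\<Sum>u\<in>A. handout C u c) + (\<Sum>u\<in>B. handout C u c)"
    unfolding received_charge_def N using AB by (simp add: sum.union_disjoint A_def B_def)
  have from_A: "(\<Sum>u\<in>A. handout C u c) \<le> g * (if g = 1 then 1/6 else 1/2)"
    using handout_to_codeword_le[OF \<open>c \<in> C\<close>]
    unfolding g_def code_degree_def A_def by (intro sum_bounded_above) simp
  have "real (card B) = 4 - real g"
    using card_open_nbhd_diff code_degree_le_4 by (simp add: B_def g_def of_nat_diff)
  moreover have "(\<Sum>u\<in>B. handout C u c) \<le> card B * (if g = 0 then 1/2 else 1)"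
    using handout_from_noncodeword_le[OF C \<open>c \<in> C\<close>]
    unfolding g_def B_def by (intro sum_bounded_above) simp
  ultimately have from_B: "(\<Sum>u\<in>B. handout C u c) \<le> (4 - real g) * (if g = 0 then 1/2 else 1)"
    by simp
  note self = share_self_le[OF C \<open>c \<in> C\<close>, folded g_def]
  consider "g = 0" | "g = 1" | "2 \<le> g"
    by linarith
  then show ?thesis
  proof cases
    case 3
    then have "2 \<le> real g"
      by simp
    with 3 total from_A from_B self show ?thesis
      by (simp split: if_splits)
  qed (use total from_A from_B self in simp_all)
qed

lemma sum_I_set_le_sum_closed_nbhd:
  fixes f :: "vtx \<Rightarrow> vtx \<Rightarrow> real"
  assumes "finite A" "finite B" "B \<subseteq> C" and A: "\<And>u. u \<in> A \<Longrightarrow> I_set C u \<subseteq> B"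
    and nonneg: "\<And>u c. c \<in> I_set C u \<Longrightarrow> 0 \<le> f u c"
  shows "(\<Sum>u\<in>A. \<Sum>c\<in>I_set C u. f u c) \<le> (\<Sum>c\<in>B. \<Sum>u\<in>closed_nbhd c. f u c)"
proof -
  have "(\<Sum>u\<in>A. \<Sum>c\<in>I_set C u. f u c) = (\<Sum>u\<in>A. \<Sum>c\<in>{c. c \<in> B \<and> c \<in> closed_nbhd u}. f u c)"
    using A \<open>B \<subseteq> C\<close> by (intro sum.cong refl) (auto simp: I_set_def)
  also have "\<dots> = (\<Sum>c\<in>B. \<Sum>u\<in>{u. u \<in> A \<and> c \<in> closed_nbhd u}. f u c)"
    using \<open>finite A\<close> \<open>finite B\<close> by (rule sum.swap_restrict)
  also have "\<dots> \<le> (\<Sum>c\<in>B. \<Sum>u\<in>closed_nbhd c. f u c)"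
  proof (intro sum_mono sum_mono2)
    fix c u
    assume "c \<in> B" and "u \<in> closed_nbhd c - {u. u \<in> A \<and> c \<in> closed_nbhd u}"
    then have "c \<in> I_set C u"
      using \<open>B \<subseteq> C\<close> mem_closed_nbhd_commute[of u c] unfolding I_set_def by blast
    then show "0 \<le> f u c"
      by (rule nonneg)
  qed (simp, use mem_closed_nbhd_commute in blast)
  finally show ?thesis .
qed

text \<open>Double counting the charges of the vertices of \<open>Qbox n\<close>, all of which end up at
  codewords of \<open>Qbox (Suc n)\<close>.\<close>
lemma local_id_code_card_Qbox_le:
  assumes C: "local_id_code C"
  shows "real (card (Qbox n)) \<le> 11/3 * card (C \<inter> Qbox (Suc n))"
proof -
  have "real (card (Qbox n)) = (\<Sum>u\<in>Qbox n. \<Sum>c\<in>I_set C u. share C u c)"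
    by (simp add: sum_share_I_set[OF C])
  also have "\<dots> \<le> (\<Sum>c\<in>C \<inter> Qbox (Suc n). received_charge C c)"
    unfolding received_charge_def
    using closed_nbhd_subset_Qbox_Suc share_nonneg
    by (intro sum_I_set_le_sum_closed_nbhd) (auto simp: I_set_def)
  also have "\<dots> \<le> (\<Sum>c\<in>C \<inter> Qbox (Suc n). 11/3)"
    using received_charge_le[OF C] by (intro sum_mono) simp
  finally show ?thesis
    by simp
qed

lemma tendsto_le_limsup_ereal:
  fixes f g :: "nat \<Rightarrow> real"
  assumes "\<forall>\<^sub>F n in sequentially. g n \<le> f n" and "g \<longlonglongrightarrow> L"
  shows "ereal L \<le> limsup (\<lambda>n. ereal (f n))"
proof -
  have "limsup (\<lambda>n. ereal (g n)) = ereal L"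
    using assms(2) by (intro lim_imp_Limsup) (simp_all add: tendsto_ereal)
  moreover have "limsup (\<lambda>n. ereal (g n)) \<le> limsup (\<lambda>n. ereal (f n))"
    using assms(1) by (intro Limsup_mono) (simp add: eventually_mono)
  ultimately show ?thesis
    by simp
qed

lemma limsup_ereal_le_tendsto:
  fixes f h :: "nat \<Rightarrow> real"
  assumes "\<forall>\<^sub>F n in sequentially. f n \<le> h n" and "h \<longlonglongrightarrow> L"
  shows "limsup (\<lambda>n. ereal (f n)) \<le> ereal L"
proof -
  have "limsup (\<lambda>n. ereal (h n)) = ereal L"
    using assms(2) by (intro lim_imp_Limsup) (simp_all add: tendsto_ereal)
  moreover have "limsup (\<lambda>n. ereal (f n)) \<le> limsup (\<lambda>n. ereal (h n))"
    using assms(1) by (intro Limsup_mono) (simp add: eventually_mono)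
  ultimately show ?thesis
    by simp
qed

lemma tendsto_lower_density: "(\<lambda>n. 3/11 * (2 * real n - 1)\<^sup>2 / (2 * real n + 1)\<^sup>2) \<longlonglongrightarrow> 3/11"
  by real_asymp

lemma local_id_code_density_ge:
  assumes C: "local_id_code C"
  shows "ereal (3/11) \<le> grid_density C"
proof -
  have "3/11 * (2 * real n - 1)\<^sup>2 / (2 * real n + 1)\<^sup>2 \<le> real (card (C \<inter> Qbox n)) / real (card (Qbox n))"
    if "1 \<le> n" for n
  proof -
    obtain m where n: "n = Suc m"
      using \<open>1 \<le> n\<close> by (cases n) auto
    have "2 * real n - 1 = 2 * real m + 1"
      by (simp add: n)
    then have "3/11 * (2 * real n - 1)\<^sup>2 = 3/11 * real (card (Qbox m))"
      by (simp only: card_Qbox)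
    also have "\<dots> \<le> real (card (C \<inter> Qbox n))"
      using local_id_code_card_Qbox_le[OF C, of m] n by simp
    finally have "3/11 * (2 * real n - 1)\<^sup>2 \<le> real (card (C \<inter> Qbox n))" .
    then have "3/11 * (2 * real n - 1)\<^sup>2 / real (card (Qbox n))
        \<le> real (card (C \<inter> Qbox n)) / real (card (Qbox n))"
      by (rule divide_right_mono) simp
    then show ?thesis
      by (simp only: card_Qbox)
  qed
  then have "\<forall>\<^sub>F n in sequentially.
      3/11 * (2 * real n - 1)\<^sup>2 / (2 * real n + 1)\<^sup>2 \<le> real (card (C \<inter> Qbox n)) / real (card (Qbox n))"
    by (rule eventually_sequentiallyI)
  then show ?thesis
    unfolding grid_density_def using tendsto_lower_density by (rule tendsto_le_limsup_ereal)
qed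


lemma density_upper_tendsto:
  "(\<lambda>n. 3 * (2 * real n + 1) * (2 * real n / 11 + 1) / (2 * real n + 1)\<^sup>2) \<longlonglongrightarrow> 3/11"
  by real_asymp

text \<open>Three of the eleven residue classes of \<open>x + 3y\<close>, so the code has density \<open>3/11\<close>.\<close>
definition mod11_code :: "vtx set" where
  "mod11_code = {(x, y). (x + 3 * y) mod 11 \<in> {0, 3, 6}}"

lemma mem_mod11_code_shift:
  "(x + a, y + b) \<in> mod11_code \<longleftrightarrow> ((x + 3 * y) mod 11 + (a + 3 * b)) mod 11 \<in> {0, 3, 6}"
proof -
  have "x + a + 3 * (y + b) = (x + 3 * y) + (a + 3 * b)"
    by simp
  then show ?thesis
    by (simp only: mod11_code_def mem_Collect_eq case_prod_conv mod_add_left_eq)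
qed

lemma int_less_11_cases:
  fixes r :: int
  assumes "0 \<le> r" "r < 11"
  obtains "r = 0" | "r = 1" | "r = 2" | "r = 3" | "r = 4" | "r = 5" | "r = 6" | "r = 7"
    | "r = 8" | "r = 9" | "r = 10"
proof -
  have "r = 0 \<or> r = 1 \<or> r = 2 \<or> r = 3 \<or> r = 4 \<or> r = 5 \<or> r = 6 \<or> r = 7 \<or> r = 8 \<or> r = 9 \<or> r = 10"
    using assms by presburger
  then show ?thesis
    using that by blast
qed

lemma mod11_code_dominating:
  "(x, y) \<in> mod11_code \<or> (x + 1, y) \<in> mod11_code \<or> (x - 1, y) \<in> mod11_code
     \<or> (x, y + 1) \<in> mod11_code \<or> (x, y - 1) \<in> mod11_code"
proof -
  have "0 \<le> (x + 3 * y) mod 11" "(x + 3 * y) mod 11 < 11"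
    by simp_all
  then show ?thesis
    using mem_mod11_code_shift[of x 0 y 0] mem_mod11_code_shift[of x 1 y 0]
      mem_mod11_code_shift[of x "-1" y 0] mem_mod11_code_shift[of x 0 y 1]
      mem_mod11_code_shift[of x 0 y "-1"]
    by (cases rule: int_less_11_cases) simp_all
qed

text \<open>The six points form the symmetric difference of the closed neighbourhoods of \<open>(x, y)\<close> and
  \<open>(x + 1, y)\<close>; similarly below for \<open>(x, y)\<close> and \<open>(x, y + 1)\<close>.\<close>
lemma mod11_code_separating_horizontal:
  "(x - 1, y) \<in> mod11_code \<or> (x, y + 1) \<in> mod11_code \<or> (x, y - 1) \<in> mod11_code
     \<or> (x + 2, y) \<in> mod11_code \<or> (x + 1, y + 1) \<in> mod11_code \<or> (x + 1, y - 1) \<in> mod11_code"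
proof -
  have "0 \<le> (x + 3 * y) mod 11" "(x + 3 * y) mod 11 < 11"
    by simp_all
  then show ?thesis
    using mem_mod11_code_shift[of x "-1" y 0] mem_mod11_code_shift[of x 0 y 1]
      mem_mod11_code_shift[of x 0 y "-1"] mem_mod11_code_shift[of x 2 y 0]
      mem_mod11_code_shift[of x 1 y 1] mem_mod11_code_shift[of x 1 y "-1"]
    by (cases rule: int_less_11_cases) simp_all
qed

lemma mod11_code_separating_vertical:
  "(x, y - 1) \<in> mod11_code \<or> (x + 1, y) \<in> mod11_code \<or> (x - 1, y) \<in> mod11_code
     \<or> (x, y + 2) \<in> mod11_code \<or> (x + 1, y + 1) \<in> mod11_code \<or> (x - 1, y + 1) \<in> mod11_code"
proof -
  have "0 \<le> (x + 3 * y) mod 11" "(x + 3 * y) mod 11 < 11"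
    by simp_all
  then show ?thesis
    using mem_mod11_code_shift[of x 0 y "-1"] mem_mod11_code_shift[of x 1 y 0]
      mem_mod11_code_shift[of x "-1" y 0] mem_mod11_code_shift[of x 0 y 2]
      mem_mod11_code_shift[of x 1 y 1] mem_mod11_code_shift[of x "-1" y 1]
    by (cases rule: int_less_11_cases) simp_all
qed

lemma mod11_code_I_set_horizontal: "I_set mod11_code (x, y) \<noteq> I_set mod11_code (x + 1, y)"
  using mod11_code_separating_horizontal[of x y]
  by (elim disjE) (rule I_set_neqI, assumption, simp add: mem_closed_nbhd_iff)+

lemma mod11_code_I_set_vertical: "I_set mod11_code (x, y) \<noteq> I_set mod11_code (x, y + 1)"
  using mod11_code_separating_vertical[of x y]
  by (elim disjE) (rule I_set_neqI, assumption, simp add: mem_closed_nbhd_iff)+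

lemma local_id_code_mod11_code: "local_id_code mod11_code"
  unfolding local_id_code_def
proof (intro conjI allI impI)
  have "(0, 0) \<in> mod11_code"
    by (simp add: mod11_code_def)
  then show "mod11_code \<noteq> {}"
    by blast
next
  fix u :: vtx
  obtain x y where u: "u = (x, y)"
    by fastforce
  show "I_set mod11_code u \<noteq> {}"
    using mod11_code_dominating[of x y]
    by (elim disjE) (rule I_set_nonempty, assumption, simp add: u mem_closed_nbhd_iff)+
next
  fix u v :: vtx
  assume "sq_adj u v"
  moreover obtain x y where u: "u = (x, y)"
    by fastforce
  ultimately have "v \<in> open_nbhd (x, y)"
    by (simp add: open_nbhd_def)
  then show "I_set mod11_code u \<noteq> I_set mod11_code v"
    using mod11_code_I_set_horizontal[of x y] mod11_code_I_set_horizontal[of "x - 1" y]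
      mod11_code_I_set_vertical[of x y] mod11_code_I_set_vertical[of x "y - 1"]
    by (auto simp: u open_nbhd_eq)
qed

text \<open>Within a row, a point of \<open>Qbox n\<close> is determined by its block \<open>(x + n) div 11\<close> and
  its residue \<open>(x + 3y) mod 11\<close>.\<close>
lemma card_mod11_code_Qbox_le: "card (mod11_code \<inter> Qbox n) \<le> 3 * (2 * n + 1) * (2 * n div 11 + 1)"
proof -
  define f :: "vtx \<Rightarrow> int \<times> int \<times> int" where
    "f = (\<lambda>(x, y). (y, (x + int n) div 11, (x + 3 * y) mod 11))"
  define T where "T = {-int n..int n} \<times> {0..int (2 * n div 11)} \<times> {0::int, 3, 6}"
  have "inj_on f (mod11_code \<inter> Qbox n)"
  proof (rule inj_onI, clarify)
    fix x y x' y'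
    assume "f (x, y) = f (x', y')"
    then have y: "y' = y" and div: "(x + int n) div 11 = (x' + int n) div 11"
      and res: "(x + 3 * y) mod 11 = (x' + 3 * y) mod 11"
      by (auto simp: f_def)
    from res have "(x + 3 * y + (int n - 3 * y)) mod 11 = (x' + 3 * y + (int n - 3 * y)) mod 11"
      by (rule mod_add_cong) (rule refl)
    then have "(x + int n) mod 11 = (x' + int n) mod 11"
      by simp
    with div have "x + int n = x' + int n"
      by (metis div_mult_mod_eq)
    with y show "x = x' \<and> y = y'"
      by simp
  qed
  moreover have "f ` (mod11_code \<inter> Qbox n) \<subseteq> T"
  proof (rule image_subsetI)
    fix p
    assume "p \<in> mod11_code \<inter> Qbox n"
    moreover obtain x y where p: "p = (x, y)"
      by fastforce
    ultimately have x: "-int n \<le> x" "x \<le> int n" and "-int n \<le> y" "y \<le> int n"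
      and "(x + 3 * y) mod 11 \<in> {0, 3, 6}"
      by (auto simp: Qbox_def mod11_code_def)
    moreover have "(x + int n) div 11 \<le> 2 * int n div 11"
      using x by (intro zdiv_mono1) simp_all
    ultimately show "f p \<in> T"
      by (simp add: p f_def T_def zdiv_int)
  qed
  ultimately have "card (mod11_code \<inter> Qbox n) \<le> card T"
    by (intro card_inj_on_le) (simp_all add: T_def)
  also have "card T = 3 * (2 * n + 1) * (2 * n div 11 + 1)"
    by (simp add: T_def card_cartesian_product nat_add_distrib nat_mult_distrib algebra_simps)
  finally show ?thesis .
qed

lemma density_mod11_code_le: "grid_density mod11_code \<le> ereal (3/11)"
  unfolding grid_density_def
proof (rule limsup_ereal_le_tendsto[OF always_eventually density_upper_tendsto], rule allI)
  fix n
  have "real (card (mod11_code \<inter> Qbox n)) \<le> real (3 * (2 * n + 1) * (2 * n div 11 + 1))"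
    using card_mod11_code_Qbox_le by (simp only: of_nat_le_iff)
  also have "\<dots> = 3 * (2 * real n + 1) * (real (2 * n div 11) + 1)"
    by (simp add: algebra_simps)
  also have "\<dots> \<le> 3 * (2 * real n + 1) * (2 * real n / 11 + 1)"
    using of_nat_div_le_of_nat[of "2 * n" 11] by (intro mult_left_mono) simp_all
  finally show "real (card (mod11_code \<inter> Qbox n)) / real (card (Qbox n))
      \<le> 3 * (2 * real n + 1) * (2 * real n / 11 + 1) / (2 * real n + 1)\<^sup>2"
    unfolding card_Qbox by (rule divide_right_mono) simp
qed

theorem mainTheorem13:
  shows "(\<forall>C. local_id_code C \<longrightarrow> grid_density C \<ge> ereal (3/11))
       \<and> (\<exists>C. local_id_code C \<and> grid_density C = ereal (3/11))
       \<and> gamma_LID_square = ereal (3/11)"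
proof -
  have lower: "ereal (3/11) \<le> grid_density C" if "local_id_code C" for C
    using that by (rule local_id_code_density_ge)
  have optimal: "grid_density mod11_code = ereal (3/11)"
    using density_mod11_code_le lower[OF local_id_code_mod11_code] by (rule antisym)
  have "gamma_LID_square = ereal (3/11)"
    unfolding gamma_LID_square_def
  proof (rule antisym)
    show "(INF C \<in> {C. local_id_code C}. grid_density C) \<le> ereal (3/11)"
      using local_id_code_mod11_code optimal by (metis INF_lower mem_Collect_eq)
  qed (use lower in \<open>auto intro: INF_greatest\<close>)
  then show ?thesis
    using lower local_id_code_mod11_code optimal by blast
qed

end
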